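(* Let $n,k,t$ be positive integers with $k<n$ and $t\ge 4$, let $q$ be a prime power and $\mathcal{D}$ the Desarguesian $(t-1)$-spread of $\mathrm{PG}(nt-1,q)$. Let $\nu$ be a $\mathcal{D}_{n-k-1}$-subspace of $\mathrm{PG}(nt-1,q)$ and let $\Pi$ be an $(nt-kt+1)$-dimensional subspace containing $\nu$ such that the subspace of $\mathrm{PG}(n-1,q^t)$ spanned by the points of $\mathcal{B}(\Pi)$ has dimension $n-k+1$. Let $\Omega$ be an $(nt-kt-2)$-dimensional subspace of $\Pi$ meeting $\nu$ in an $(nt-kt-4)$-dimensional subspace, let $\Gamma$ be a plane of $\Pi$ skew from $\Omega$, and let $\bar{B}$ be a minimal blocking set (with respect to lines) of $\Gamma$ which is disjoint from $\nu$. Let $K$ be the cone with vertex $\Omega$ and base $\bar{B}$. Then $\mathcal{B}(K)$ is a minimal blocking set with respect to $(k-1)$-dimensional subspaces of $\mathrm{PG}(n-1,q^t)$.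
   Context: Field reduction: each point of $\mathrm{PG}(n-1,q^t)$ corresponds to a $(t-1)$-dimensional subspace of $\mathrm{PG}(nt-1,q)$ (the $1$-dimensional $\mathbb{F}_{q^t}$-subspace viewed over $\mathbb{F}_q$); these form the Desarguesian $(t-1)$-spread $\mathcal{D}$. A $\mathcal{D}_{r-1}$-subspace is an $(rt-1)$-dimensional subspace of $\mathrm{PG}(nt-1,q)$ spanned by elements of $\mathcal{D}$ (the field reduction of an $(r-1)$-dimensional subspace of $\mathrm{PG}(n-1,q^t)$). For $U\subseteq\mathrm{PG}(nt-1,q)$, $\mathcal{B}(U)$ is the set of elements of $\mathcal{D}$ meeting $U$, identified with points of $\mathrm{PG}(n-1,q^t)$. The cone with vertex $\Omega$ and base $\bar{B}$ is $\bigcup_{P\in\bar B}\langle P,\Omega\rangle$. A blocking set with respect to $j$-spaces is a point set meeting every $j$-dimensional subspace; minimal means no proper subset has this property. *)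

theory Defs
  imports "HOL-Analysis.Analysis"
begin

text \<open>Setting.  'a is the finite field F_q, 'b is the finite field F_(q^t), and
 emb :: 'a => 'b is a field embedding (so F_q is a subfield of F_(q^t)).
 The ambient space of PG(n-1,q^t) is V = 'b^'n with n = CARD('n).
 Field reduction: the same set V viewed as an F_q-vector space (scalar
 multiplication c . v = emb c *s v) has F_q-dimension n t, so PG(nt-1,q) is
 the projective space of V over F_q.  A projective subspace of dimension d is
 a linear subspace of vector dimension d+1; a point is a 1-dimensional subspace.
 A point set of PG(nt-1,q) such as the cone K is represented by the union of its
 points (a set of vectors).\<close>

definition subfield_emb :: "('a::field \<Rightarrow> 'b::field) \<Rightarrow> bool" where
  "subfield_emb emb \<longleftrightarrow> inj emb \<and> emb 0 = 0 \<and> emb 1 = 1 \<and>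
     (\<forall>x y. emb (x + y) = emb x + emb y) \<and> (\<forall>x y. emb (x * y) = emb x * emb y)"

definition scq :: "('a::field \<Rightarrow> 'b::field) \<Rightarrow> 'a \<Rightarrow> 'b^'n \<Rightarrow> 'b^'n" where
  "scq emb c v = emb c *s v"

definition sub_q :: "('a::field \<Rightarrow> 'b::field) \<Rightarrow> ('b^'n) set \<Rightarrow> bool" where
  "sub_q emb S = module.subspace (scq emb) S"

definition span_q :: "('a::field \<Rightarrow> 'b::field) \<Rightarrow> ('b^'n) set \<Rightarrow> ('b^'n) set" where
  "span_q emb S = module.span (scq emb) S"

definition dim_q :: "('a::field \<Rightarrow> 'b::field) \<Rightarrow> ('b^'n) set \<Rightarrow> nat" where
  "dim_q emb S = vector_space.dim (scq emb) S"

definition sub_Q :: "('b::field^'n) set \<Rightarrow> bool" where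
  "sub_Q S = module.subspace ((*s) :: 'b \<Rightarrow> 'b^'n \<Rightarrow> 'b^'n) S"

definition span_Q :: "('b::field^'n) set \<Rightarrow> ('b^'n) set" where
  "span_Q S = module.span ((*s) :: 'b \<Rightarrow> 'b^'n \<Rightarrow> 'b^'n) S"

definition dim_Q :: "('b::field^'n) set \<Rightarrow> nat" where
  "dim_Q S = vector_space.dim ((*s) :: 'b \<Rightarrow> 'b^'n \<Rightarrow> 'b^'n) S"

definition pg_q_subspace :: "('a::field \<Rightarrow> 'b::field) \<Rightarrow> nat \<Rightarrow> ('b^'n) set \<Rightarrow> bool" where
  "pg_q_subspace emb d W \<longleftrightarrow> sub_q emb W \<and> dim_q emb W = d + 1"

definition points_q :: "('a::field \<Rightarrow> 'b::field) \<Rightarrow> ('b^'n) set \<Rightarrow> ('b^'n) set set" where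
  "points_q emb W = {P. pg_q_subspace emb 0 P \<and> P \<subseteq> W}"

text \<open>The Desarguesian spread: the F_(q^t)-span of each nonzero vector, viewed over F_q.
 Each element is identified with the corresponding point of PG(n-1,q^t).\<close>
definition desarg_spread :: "('b::field^'n) set set" where
  "desarg_spread = {span_Q {v} | v. v \<noteq> 0}"

text \<open>A D_(r-1)-subspace: the field reduction of an (r-1)-dimensional subspace of
 PG(n-1,q^t), i.e. an F_(q^t)-subspace of dimension r, viewed over F_q.\<close>
definition D_subspace :: "nat \<Rightarrow> ('b::field^'n) set \<Rightarrow> bool" where
  "D_subspace r W \<longleftrightarrow> sub_Q W \<and> dim_Q W = r"

definition Bset :: "('b::field^'n) set \<Rightarrow> ('b^'n) set set" where
  "Bset U = {S \<in> desarg_spread. S \<inter> U - {0} \<noteq> {}}"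

definition cone :: "('a::field \<Rightarrow> 'b::field) \<Rightarrow> ('b^'n) set \<Rightarrow> ('b^'n) set set \<Rightarrow> ('b^'n) set" where
  "cone emb \<Omega> Bbar = (\<Union>P\<in>Bbar. span_q emb (P \<union> \<Omega>))"

definition blocking_Q :: "nat \<Rightarrow> ('b::field^'n) set set \<Rightarrow> bool" where
  "blocking_Q j B \<longleftrightarrow> B \<subseteq> desarg_spread \<and>
     (\<forall>W. sub_Q W \<and> dim_Q W = j + 1 \<longrightarrow> (\<exists>P\<in>B. P \<subseteq> W))"

definition minimal_blocking_Q :: "nat \<Rightarrow> ('b::field^'n) set set \<Rightarrow> bool" where
  "minimal_blocking_Q j B \<longleftrightarrow> blocking_Q j B \<and> (\<forall>B'. B' \<subset> B \<longrightarrow> \<not> blocking_Q j B')"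

definition blocking_lines_in :: "('a::field \<Rightarrow> 'b::field) \<Rightarrow> ('b^'n) set \<Rightarrow> ('b^'n) set set \<Rightarrow> bool" where
  "blocking_lines_in emb \<Gamma> B \<longleftrightarrow> B \<subseteq> points_q emb \<Gamma> \<and>
     (\<forall>L. pg_q_subspace emb 1 L \<and> L \<subseteq> \<Gamma> \<longrightarrow> (\<exists>P\<in>B. P \<subseteq> L))"

definition minimal_blocking_lines_in :: "('a::field \<Rightarrow> 'b::field) \<Rightarrow> ('b^'n) set \<Rightarrow> ('b^'n) set set \<Rightarrow> bool" where
  "minimal_blocking_lines_in emb \<Gamma> B \<longleftrightarrow> blocking_lines_in emb \<Gamma> B \<and>
     (\<forall>B'. B' \<subset> B \<longrightarrow> \<not> blocking_lines_in emb \<Gamma> B')"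

end

theory Submission
  imports Defs
begin

text \<open>
  Let K be the cone and U the F_(q^t)-span of \<Pi>, a subspace of rank n-k+2.

  Blocking: a (k-1)-space W of PG(n-1,q^t) meets U in at least a line X.  If X meets \<nu>,
  the corresponding spread element lies in \<nu> and, since t \<ge> 4 while \<Omega> \<inter> \<nu> has
  codimension 3 in \<nu>, it meets \<Omega> \<subseteq> K.  Otherwise X complements \<nu> in U, so X \<inter> \<Pi> has
  F_q-rank at least 2; either it meets \<Omega>, or together with \<Omega> it meets the plane \<Gamma> in a
  line, which contains a point of Bbar, and going back along \<Omega> gives a point of K in X.

  Minimality: every point S of B(K) lies on a tangent line L \<subseteq> U, one containing no other
  point of B(K); as U has codimension k-2, L extends to a (k-1)-space W with W \<inter> U = L, and
  W is blocked by S alone.  A tangent line at \<langle>x\<rangle> is the F_(q^t)-span of an F_q-line through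
  x that complements \<nu> in \<Pi> and meets K only in multiples of x.  For x \<in> \<nu> its second
  generator is e1 + \<theta> e2 with \<theta> \<notin> F_q, where e1, e2 complement \<nu> in \<Pi>; otherwise it
  is a point of \<Gamma> (off Bbar if x \<in> \<Omega>, on the tangent line of Bbar at the projection of x
  if x \<notin> \<Omega>) shifted by a suitable vector of \<Omega>.
\<close>

lemma set_plus_eq: "A + B = {x + y | x y. x \<in> A \<and> y \<in> B}"
  by (auto simp: set_plus_def)

context module
begin

lemma span_Un_subspaces:
  assumes "subspace A" "subspace B"
  shows "span (A \<union> B) = A + B"
proof -
  have spans: "span A = A" "span B = B"
    using assms by simp_all
  show ?thesis
    unfolding span_Un set_plus_eq spans ..
qed

lemma subspace_set_plus: "subspace A \<Longrightarrow> subspace B \<Longrightarrow> subspace (A + B)"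
  using span_Un_subspaces subspace_span by metis

lemma set_plus_subset_subspace: "subspace C \<Longrightarrow> A \<subseteq> C \<Longrightarrow> B \<subseteq> C \<Longrightarrow> A + B \<subseteq> C"
  unfolding set_plus_eq using subspace_add by blast

lemma subset_set_plus_left: "subspace B \<Longrightarrow> A \<subseteq> A + B"
  unfolding set_plus_eq using subspace_0 by force

lemma subset_set_plus_right: "subspace A \<Longrightarrow> B \<subseteq> A + B"
  unfolding set_plus_eq using subspace_0 by force

lemma span_pair:
  fixes a b :: 'b
  shows "span {a, b} = {c *s a + d *s b | c d. True}"
proof -
  have "span {a, b} = span ({a} \<union> {b})"
    by (metis insert_is_Un)
  also have "\<dots> = {x + y | x y. x \<in> span {a} \<and> y \<in> span {b}}"
    by (rule span_Un)
  finally show ?thesis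
    by (auto simp: span_singleton)
qed

lemma direct_sum_unique:
  assumes "subspace A" "subspace B" "A \<inter> B = {0}"
    and "a \<in> A" "a' \<in> A" "b \<in> B" "b' \<in> B" "a + b = a' + b'"
  shows "a = a'"
proof -
  have "a - a' = b' - b"
    using assms(8) by (simp add: algebra_simps)
  then have "a - a' \<in> A \<inter> B"
    using subspace_diff[OF assms(1,4,5)] subspace_diff[OF assms(2,7,6)] by simp
  then show ?thesis
    using assms(3) by simp
qed

lemma exists_translate_not_in_subspace:
  assumes "subspace V" "0 \<in> A" "\<not> A \<subseteq> V"
  shows "\<exists>z\<in>A. r + z \<notin> V"
proof (rule ccontr)
  assume "\<not> ?thesis"
  then have translates: "r + z \<in> V" if "z \<in> A" for z
    using that by blast
  have "z \<in> V" if "z \<in> A" for z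
    using subspace_diff[OF assms(1) translates[OF that] translates[OF assms(2)]] by simp
  then show False
    using assms(3) by blast
qed

end

context vector_space
begin

lemma scale_mem_subspace_iff:
  fixes v :: 'b
  assumes "c \<noteq> 0" "subspace S"
  shows "c *s v \<in> S \<longleftrightarrow> v \<in> S"
proof
  assume "c *s v \<in> S"
  then have "inverse c *s (c *s v) \<in> S"
    by (rule subspace_scale[OF assms(2)])
  then show "v \<in> S"
    using assms(1) by simp
next
  assume "v \<in> S"
  then show "c *s v \<in> S"
    by (rule subspace_scale[OF assms(2)])
qed

lemma independent_pair_coeffs:
  fixes a b :: 'b
  assumes "independent {a, b}" "a \<noteq> b" "x *s a + y *s b = 0"
  shows "x = 0 \<and> y = 0"
proof -
  let ?u = "\<lambda>v. if v = a then x else y"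
  have "(\<Sum>v\<in>{a, b}. ?u v *s (v :: 'b)) = 0"
    using assms(2,3) by (simp add: sum.insert_remove)
  then have "?u v = 0" if "v \<in> {a, b}" for v
    using independentD[OF assms(1) _ order_refl, of ?u v] that by simp
  then show ?thesis
    using assms(2) by (metis insertI1 insertI2 singletonI)
qed

lemma card_span_independent:
  assumes "finite (UNIV :: 'a set)" and ind: "independent B" and fin: "finite B"
  shows "card (span B) = CARD('a) ^ card B"
proof -
  let ?comb = "\<lambda>u. \<Sum>v\<in>B. u v *s v"
  have span_eq: "span B = ?comb ` (B \<rightarrow>\<^sub>E UNIV)"
  proof
    show "span B \<subseteq> ?comb ` (B \<rightarrow>\<^sub>E UNIV)"
    proof
      fix x assume "x \<in> span B"
      then obtain u where x: "x = ?comb u"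
        using span_finite[OF fin] by auto
      have "x = ?comb (restrict u B)"
        unfolding x by (rule sum.cong) auto
      moreover have "restrict u B \<in> B \<rightarrow>\<^sub>E UNIV"
        by simp
      ultimately show "x \<in> ?comb ` (B \<rightarrow>\<^sub>E UNIV)"
        by blast
    qed
    show "?comb ` (B \<rightarrow>\<^sub>E UNIV) \<subseteq> span B"
      unfolding span_finite[OF fin] by auto
  qed
  have "inj_on ?comb (B \<rightarrow>\<^sub>E UNIV)"
  proof (rule inj_onI)
    fix u w assume u: "u \<in> B \<rightarrow>\<^sub>E UNIV" and w: "w \<in> B \<rightarrow>\<^sub>E UNIV" and eq: "?comb u = ?comb w"
    have "(\<Sum>v\<in>B. (u v - w v) *s v) = 0"
      using eq by (simp add: scale_left_diff_distrib sum_subtractf)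
    then have "\<forall>v\<in>B. u v - w v = 0"
      using independentD[OF ind fin subset_refl, of "\<lambda>v. u v - w v"] by blast
    then show "u = w"
      using u w by (auto simp: PiE_def extensional_def fun_eq_iff)
  qed
  then have "card (span B) = card (B \<rightarrow>\<^sub>E (UNIV :: 'a set))"
    unfolding span_eq by (rule card_image)
  also have "\<dots> = CARD('a) ^ card B"
    by (simp add: card_funcsetE fin)
  finally show ?thesis .
qed

lemma card_subspace:
  assumes "finite (UNIV :: 'a set)" "subspace S" "finite S"
  shows "card S = CARD('a) ^ dim S"
proof -
  obtain B where B: "B \<subseteq> S" "independent B" "S \<subseteq> span B" "card B = dim S"
    using basis_exists by blast
  have "span B = S"
    using B assms(2) span_minimal by blast
  moreover have "finite B"
    using B(1) assms(3) finite_subset by blast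
  ultimately show ?thesis
    using card_span_independent[OF assms(1) B(2)] B(4) by simp
qed

end

context finite_dimensional_vector_space
begin

lemma dim_set_plus_Int:
  "subspace S \<Longrightarrow> subspace T \<Longrightarrow> dim (S + T) + dim (S \<inter> T) = dim S + dim T"
  unfolding set_plus_eq by (rule dim_sums_Int)

lemma dim_one_eq_span:
  assumes "subspace P" "dim P = 1" "p \<in> P" "p \<noteq> 0"
  shows "P = span {p}"
proof -
  have "span {p} \<subseteq> P"
    using assms span_minimal by blast
  moreover have "dim (span {p}) = 1"
    using assms by simp
  ultimately show ?thesis
    using subspace_dim_equal assms by (metis le_refl subspace_span)
qed

lemma span_singleton_eq_of_mem:
  assumes "w \<in> span {v}" "w \<noteq> 0"
  shows "span {w} = span {v}"
proof -
  have "v \<noteq> 0"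
    using assms by auto
  then have "dim (span {v}) = 1"
    by simp
  then show ?thesis
    using dim_one_eq_span[of "span {v}" w] assms by simp
qed

lemma exists_nonzero_of_dim_pos:
  assumes "0 < dim S" obtains x where "x \<in> S" "x \<noteq> 0"
  using assms dim_eq_0 by (metis gr_implies_not0 insertI1 subsetI subset_singletonD)

lemma exists_subspace_of_dim:
  assumes "subspace Y" "d \<le> dim Y"
  obtains L where "subspace L" "L \<subseteq> Y" "dim L = d"
proof -
  obtain B where B: "B \<subseteq> Y" "independent B" "Y \<subseteq> span B" "card B = dim Y"
    using basis_exists by blast
  have "d \<le> card B"
    using B(4) assms(2) by simp
  then obtain C where C: "C \<subseteq> B" "card C = d"
    by (rule obtain_subset_with_card_n)
  have "independent C"
    using C B independent_mono by blast
  then have "dim (span C) = d"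
    using C dim_span_eq_card_independent by simp
  moreover have "span C \<subseteq> Y"
    using C B assms span_minimal by (meson order_trans)
  ultimately show ?thesis
    using that subspace_span by blast
qed

lemma obtain_complement:
  assumes U: "subspace U" and V: "subspace V" and UV: "U \<subseteq> V"
  obtains E where "E \<subseteq> V" "independent E" "card E = dim V - dim U"
    "V \<subseteq> U + span E" "U \<inter> span E = {0}"
proof -
  obtain BU where BU: "BU \<subseteq> U" "independent BU" "U \<subseteq> span BU" "card BU = dim U"
    using basis_exists by blast
  have "BU \<subseteq> V"
    using BU(1) UV by blast
  then obtain B where B: "BU \<subseteq> B" "B \<subseteq> V" "independent B" "V \<subseteq> span B"
    using maximal_independent_subset_extend BU(2) by blast
  define E where "E = B - BU"
  have fin: "finite B"
    using B(3) finiteI_independent by blast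
  have indE: "independent E"
    unfolding E_def using B(3) independent_mono by blast
  have cardE: "card E = dim V - dim U"
    unfolding E_def using card_Diff_subset[OF finite_subset[OF B(1) fin] B(1)]
      basis_card_eq_dim[OF B(2,4,3)] BU(4) by simp
  have "span BU = U"
    using span_minimal[OF BU(1) U] BU(3) by blast
  moreover have "B = BU \<union> E"
    unfolding E_def using B(1) by blast
  ultimately have VUE: "V \<subseteq> U + span E"
    using B(4) by (simp add: span_Un set_plus_eq)
  have "dim (U + span E) + dim (U \<inter> span E) = dim U + card E"
    using dim_set_plus_Int[OF U subspace_span] dim_span_eq_card_independent[OF indE] by simp
  moreover have "dim V \<le> dim (U + span E)"
    using VUE dim_subset by blast
  moreover have "dim U \<le> dim V"
    using UV dim_subset by blast
  ultimately have "dim (U \<inter> span E) = 0"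
    using cardE by linarith
  moreover have "0 \<in> U \<inter> span E"
    using U subspace_0 span_zero by blast
  ultimately have "U \<inter> span E = {0}"
    by auto
  moreover have "E \<subseteq> V"
    unfolding E_def using B(2) by blast
  ultimately show ?thesis
    using that indE cardE VUE by blast
qed

lemma exists_subspace_Int_subset:
  assumes U: "subspace U" and L: "subspace L" "L \<subseteq> U"
  obtains W where "subspace W" "dim W = dim L + (dim (UNIV :: 'b set) - dim U)" "W \<inter> U \<subseteq> L"
proof -
  obtain E where E: "E \<subseteq> UNIV" "independent E" "card E = dim (UNIV :: 'b set) - dim U"
      "UNIV \<subseteq> U + span E" "U \<inter> span E = {0}"
    by (rule obtain_complement[OF U subspace_UNIV subset_UNIV])
  define W where "W = L + span E"
  have "L \<inter> span E \<subseteq> {0}"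
    using E(5) L(2) by blast
  then have "dim (L \<inter> span E) = 0"
    by simp
  then have dimW: "dim W = dim L + (dim (UNIV :: 'b set) - dim U)"
    using dim_set_plus_Int[OF L(1) subspace_span, of E] dim_span_eq_card_independent[OF E(2)] E(3)
    unfolding W_def by linarith
  have WU: "W \<inter> U \<subseteq> L"
  proof
    fix x assume x: "x \<in> W \<inter> U"
    then have "x \<in> L + span E"
      unfolding W_def by blast
    then obtain l c where lc: "x = l + c" "l \<in> L" "c \<in> span E"
      by (rule set_plus_elim)
    have "c = x - l"
      using lc by simp
    then have "c \<in> U"
      using x lc L U subspace_diff by blast
    then have "c = 0"
      using E(5) lc(3) by blast
    then show "x \<in> L"
      using lc by simp
  qed
  have "subspace W"
    unfolding W_def by (rule subspace_set_plus[OF L(1) subspace_span])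
  then show ?thesis
    using dimW WU by (rule that)
qed

lemma span_pair_off_subspace:
  fixes x w :: 'b
  assumes N: "subspace N" and x: "x \<notin> N" and w: "w \<notin> N + span {x}"
  shows "span {x, w} \<inter> N \<subseteq> {0}" "dim (span {x, w}) = 2"
proof -
  show "span {x, w} \<inter> N \<subseteq> {0}"
  proof
    fix y assume y: "y \<in> span {x, w} \<inter> N"
    then obtain a b where ab: "y = a *s x + b *s w"
      unfolding span_pair by blast
    have "(- a) *s x \<in> span {x}"
      by (intro span_scale span_base) simp
    then have "y + (- a) *s x \<in> N + span {x}"
      using y by (intro set_plus_intro) auto
    moreover have "b *s w = y + (- a) *s x"
      using ab by (simp add: scale_minus_left)
    ultimately have "b *s w \<in> N + span {x}"
      by simp
    then have "b = 0"
      using w scale_mem_subspace_iff[OF _ subspace_set_plus[OF N subspace_span]] by blast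
    then have "a *s x \<in> N"
      using ab y by simp
    then have "a = 0"
      using scale_mem_subspace_iff[OF _ N] x by blast
    then show "y \<in> {0}"
      using ab \<open>b = 0\<close> by simp
  qed
  have "w \<notin> span {x}"
    using w subset_set_plus_right[OF N] by blast
  moreover have "x \<noteq> 0"
    using x subspace_0[OF N] by blast
  ultimately have "independent {w, x}" "w \<noteq> x"
    using independent_insertI[of w "{x}"] span_base[of w "{w}"] by auto
  then show "dim (span {x, w}) = 2"
    using dim_span_eq_card_independent by (simp add: insert_commute)
qed

end

lemma one_less_card_field: "1 < CARD('a::{finite,field})"
proof -
  have "2 \<le> card {0 :: 'a, 1}"
    by simp
  also have "\<dots> \<le> CARD('a)"
    by (rule card_mono) auto
  finally show ?thesis
    by simp
qed

lemma vector_space_scq: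
  assumes "subfield_emb emb"
  shows "vector_space (scq emb :: 'a::field \<Rightarrow> 'b::field^'n \<Rightarrow> 'b^'n)"
  using assms unfolding vector_space_def scq_def subfield_emb_def
  by (simp add: vec.scale_right_distrib vec.scale_left_distrib vec.scale_scale)

lemma Bset_iff: "S \<in> Bset A \<longleftrightarrow> (\<exists>w\<in>A. w \<noteq> 0 \<and> S = vec.span {w})"
proof
  assume "S \<in> Bset A"
  then obtain v w where "S = vec.span {v}" "w \<in> S" "w \<in> A" "w \<noteq> 0"
    by (auto simp: Bset_def desarg_spread_def span_Q_def)
  then show "\<exists>w\<in>A. w \<noteq> 0 \<and> S = vec.span {w}"
    using vec.span_singleton_eq_of_mem[of w v] by auto
next
  assume "\<exists>w\<in>A. w \<noteq> 0 \<and> S = vec.span {w}"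
  then obtain w where w: "w \<in> A" "w \<noteq> 0" "S = vec.span {w}"
    by blast
  then have "w \<in> S \<inter> A - {0}"
    using vec.span_base[of w "{w}"] by simp
  moreover have "S \<in> desarg_spread"
    unfolding desarg_spread_def span_Q_def using w by blast
  ultimately show "S \<in> Bset A"
    unfolding Bset_def by blast
qed

lemma span_Q_Union_Bset: "span_Q (\<Union>(Bset A)) = vec.span A"
proof -
  have "\<Union>(Bset A) \<subseteq> vec.span A"
  proof
    fix z assume "z \<in> \<Union>(Bset A)"
    then obtain w where w: "w \<in> A" "z \<in> vec.span {w}"
      by (auto simp: Bset_iff)
    then show "z \<in> vec.span A"
      using vec.span_mono[of "{w}" A] by blast
  qed
  moreover have "A \<subseteq> vec.span (\<Union>(Bset A))"
  proof
    fix w assume w: "w \<in> A"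
    show "w \<in> vec.span (\<Union>(Bset A))"
    proof (cases "w = 0")
      case True
      then show ?thesis
        by (simp add: vec.span_zero)
    next
      case False
      then have "vec.span {w} \<in> Bset A"
        using w by (auto simp: Bset_iff)
      moreover have "w \<in> vec.span {w}"
        by (simp add: vec.span_base)
      ultimately show ?thesis
        by (meson UnionI vec.span_base)
    qed
  qed
  ultimately show ?thesis
    unfolding span_Q_def using vec.span_minimal[of _ "vec.span A"] vec.span_minimal[of A]
    by (metis vec.span_span vec.subspace_span subset_antisym)
qed

locale field_reduction =
  q: finite_dimensional_vector_space "scq emb" Basis
  for emb :: "'a::{finite,field} \<Rightarrow> 'b::{finite,field}" and Basis :: "('b^'n) set" +
  fixes t :: nat
  assumes subfield_emb: "subfield_emb emb"
    and card_extension: "CARD('b) = CARD('a) ^ t"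
begin

lemma emb_eq_0_iff [simp]: "emb a = 0 \<longleftrightarrow> a = 0"
  using subfield_emb unfolding subfield_emb_def by (metis injD)

lemma emb_mult: "emb (a * b) = emb a * emb b"
  using subfield_emb by (simp add: subfield_emb_def)

lemma emb_0 [simp]: "emb 0 = 0"
  by simp

lemma emb_divide: "emb (a / b) = emb a / emb b"
proof (cases "b = 0")
  case False
  then have "emb (a / b) * emb b = emb a"
    by (simp flip: emb_mult)
  then show ?thesis
    using False by (simp add: eq_divide_eq)
qed simp

lemma pg_q_subspace_iff: "pg_q_subspace emb d W \<longleftrightarrow> q.subspace W \<and> q.dim W = d + 1"
  by (simp add: pg_q_subspace_def sub_q_def dim_q_def)

lemma subspace_imp_q_subspace: "vec.subspace S \<Longrightarrow> q.subspace S"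
  unfolding q.subspace_def vec.subspace_def scq_def by blast

lemma q_span_subset_span: "q.span S \<subseteq> vec.span S"
  by (rule q.span_minimal) (auto intro: subspace_imp_q_subspace vec.span_base)

lemma q_dim_eq:
  assumes "vec.subspace S"
  shows "q.dim S = t * vec.dim S"
proof -
  have "CARD('a) ^ q.dim S = card S"
    using q.card_subspace[OF _ subspace_imp_q_subspace[OF assms]] by simp
  also have "\<dots> = CARD('a) ^ (t * vec.dim S)"
    using vec.card_subspace[OF _ assms] by (simp add: card_extension power_mult)
  finally show ?thesis
    using one_less_card_field power_inject_exp by blast
qed

lemma exists_not_in_range_emb:
  assumes "1 < t"
  obtains \<theta> where "\<theta> \<notin> range emb"
proof (rule ccontr)
  assume "\<not> thesis"
  with that have "range emb = UNIV"
    by blast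
  then have "CARD('a) ^ t = CARD('a) ^ 1"
    using card_image[of emb UNIV] subfield_emb card_extension by (simp add: subfield_emb_def)
  then have "t = 1"
    using one_less_card_field power_inject_exp by blast
  with assms show False
    by simp
qed

lemma blocking_lines_point:
  "blocking_lines_in emb \<Gamma> B \<Longrightarrow> P \<in> B \<Longrightarrow> q.subspace P \<and> q.dim P = 1 \<and> P \<subseteq> \<Gamma>"
  by (auto simp: blocking_lines_in_def points_q_def pg_q_subspace_iff)

lemma blocking_lines_meets_line:
  "blocking_lines_in emb \<Gamma> B \<Longrightarrow> q.subspace L \<Longrightarrow> q.dim L = 2 \<Longrightarrow> L \<subseteq> \<Gamma> \<Longrightarrow> \<exists>P\<in>B. P \<subseteq> L"
  by (auto simp: blocking_lines_in_def pg_q_subspace_iff)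

lemma minimal_blocking_lines_tangent:
  assumes B: "minimal_blocking_lines_in emb \<Gamma> B" and P: "P \<in> B"
  obtains l where "q.subspace l" "q.dim l = 2" "l \<subseteq> \<Gamma>" "P \<subseteq> l" "\<And>P'. P' \<in> B \<Longrightarrow> P' \<subseteq> l \<Longrightarrow> P' = P"
proof -
  have "\<not> blocking_lines_in emb \<Gamma> (B - {P})"
    using B P unfolding minimal_blocking_lines_in_def by blast
  moreover have "B - {P} \<subseteq> points_q emb \<Gamma>"
    using B by (auto simp: minimal_blocking_lines_in_def blocking_lines_in_def)
  ultimately obtain l where l: "q.subspace l" "q.dim l = 2" "l \<subseteq> \<Gamma>" "\<forall>P'\<in>B - {P}. \<not> P' \<subseteq> l"
    unfolding blocking_lines_in_def pg_q_subspace_iff by auto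
  moreover obtain P' where "P' \<in> B" "P' \<subseteq> l"
    using blocking_lines_meets_line[OF _ l(1-3)] B unfolding minimal_blocking_lines_in_def by blast
  ultimately show ?thesis
    using that by blast
qed

lemma minimal_blocking_lines_misses_point:
  assumes B: "minimal_blocking_lines_in emb \<Gamma> B" and \<Gamma>: "q.subspace \<Gamma>" "2 \<le> q.dim \<Gamma>"
  obtains R where "q.subspace R" "q.dim R = 1" "R \<subseteq> \<Gamma>" "R \<notin> B"
proof -
  have blocking: "blocking_lines_in emb \<Gamma> B"
    using B unfolding minimal_blocking_lines_in_def by blast
  obtain L where L: "q.subspace L" "L \<subseteq> \<Gamma>" "q.dim L = 2"
    by (rule q.exists_subspace_of_dim[OF \<Gamma>])
  obtain P where P: "P \<in> B"
    using blocking_lines_meets_line[OF blocking L(1,3,2)] by blast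
  obtain l where l: "q.subspace l" "q.dim l = 2" "l \<subseteq> \<Gamma>" "P \<subseteq> l"
    and tangent: "\<And>P'. P' \<in> B \<Longrightarrow> P' \<subseteq> l \<Longrightarrow> P' = P"
    by (rule minimal_blocking_lines_tangent[OF B P]) blast
  have "\<not> l \<subseteq> P"
    using q.dim_subset[of l P] l(2) blocking_lines_point[OF blocking P] by auto
  then obtain r where r: "r \<in> l" "r \<notin> P"
    by blast
  have "r \<noteq> 0"
    using r(2) q.subspace_0 blocking_lines_point[OF blocking P] by blast
  then have "q.dim (q.span {r}) = 1"
    by simp
  moreover have "q.span {r} \<subseteq> l"
    using q.span_minimal r(1) l(1) by blast
  moreover have "q.span {r} \<notin> B"
    using tangent calculation(2) r(2) q.span_base[of r "{r}"] by auto
  ultimately show ?thesis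
    using that[of "q.span {r}"] l(3) by auto
qed

end

locale cone_configuration = field_reduction emb Basis t
  for emb :: "'a::{finite,field} \<Rightarrow> 'b::{finite,field}" and Basis :: "('b^'n) set" and t +
  fixes n k :: nat
    and nu Pi_s Omega Gamma :: "('b^'n) set"
    and Bbar :: "('b^'n) set set"
  assumes n_def: "n = CARD('n)"
    and k_pos: "0 < k" and k_less_n: "k < n" and t_ge_4: "4 \<le> t"
    and nu_D: "D_subspace (n - k) nu"
    and Pi_sub: "pg_q_subspace emb ((n - k) * t + 1) Pi_s" and nu_Pi: "nu \<subseteq> Pi_s"
    and Pi_span: "dim_Q (span_Q (\<Union>(Bset Pi_s))) = n - k + 2"
    and Omega_sub: "pg_q_subspace emb ((n - k) * t - 2) Omega" and Omega_Pi: "Omega \<subseteq> Pi_s"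
    and Omega_nu: "pg_q_subspace emb ((n - k) * t - 4) (Omega \<inter> nu)"
    and Gamma_sub: "pg_q_subspace emb 2 Gamma" and Gamma_Pi: "Gamma \<subseteq> Pi_s"
    and Gamma_Omega: "Gamma \<inter> Omega = {0}"
    and Bbar: "minimal_blocking_lines_in emb Gamma Bbar"
begin

abbreviation qscale :: "'a \<Rightarrow> 'b^'n \<Rightarrow> 'b^'n" (infixr \<open>*\<^sub>q\<close> 75)
  where "c *\<^sub>q v \<equiv> scq emb c v"

abbreviation K where "K \<equiv> cone emb Omega Bbar"
abbreviation U where "U \<equiv> vec.span Pi_s"

lemma four_le_dim_nu: "4 \<le> (n - k) * t"
proof -
  have "1 * 4 \<le> (n - k) * t"
    using k_less_n t_ge_4 by (intro mult_le_mono) auto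
  then show ?thesis
    by simp
qed

lemma Pi_s: "q.subspace Pi_s" "q.dim Pi_s = (n - k) * t + 2"
  using Pi_sub by (auto simp: pg_q_subspace_iff)

lemma Omega: "q.subspace Omega" "q.dim Omega = (n - k) * t - 1"
  using Omega_sub four_le_dim_nu by (auto simp: pg_q_subspace_iff)

lemma q_dim_Omega_Int_nu: "q.dim (Omega \<inter> nu) = (n - k) * t - 3"
  using Omega_nu four_le_dim_nu by (auto simp: pg_q_subspace_iff)

lemma Gamma: "q.subspace Gamma" "q.dim Gamma = 3"
  using Gamma_sub by (auto simp: pg_q_subspace_iff)

lemma nu: "vec.subspace nu" "vec.dim nu = n - k" "q.subspace nu" "q.dim nu = (n - k) * t"
  using nu_D subspace_imp_q_subspace q_dim_eq by (auto simp: D_subspace_def sub_Q_def dim_Q_def)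

lemma dim_U: "vec.dim U = n - k + 2"
  using Pi_span unfolding span_Q_Union_Bset dim_Q_def .

lemma vec_dim_le_n: "vec.dim (A :: ('b^'n) set) \<le> n"
  using vec.dim_subset[of A UNIV] by (simp add: card_cart_basis n_def)

lemma two_le_k: "2 \<le> k"
  using vec_dim_le_n[of U] dim_U by simp

lemma Omega_plus_nu: "Omega + nu = Pi_s"
proof -
  have "q.dim (Omega + nu) + q.dim (Omega \<inter> nu) = q.dim Omega + q.dim nu"
    by (rule q.dim_set_plus_Int[OF Omega(1) nu(3)])
  then have "q.dim (Omega + nu) = q.dim Pi_s"
    using q_dim_Omega_Int_nu Omega nu Pi_s four_le_dim_nu by linarith
  moreover have "Omega + nu \<subseteq> Pi_s"
    by (rule q.set_plus_subset_subspace[OF Pi_s(1) Omega_Pi nu_Pi])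
  ultimately show ?thesis
    using q.subspace_dim_equal[OF q.subspace_set_plus[OF Omega(1) nu(3)] Pi_s(1)] by simp
qed

lemma Bbar_blocking: "blocking_lines_in emb Gamma Bbar"
  using Bbar unfolding minimal_blocking_lines_in_def by blast

lemma Bbar_point: "P \<in> Bbar \<Longrightarrow> q.subspace P \<and> q.dim P = 1 \<and> P \<subseteq> Gamma"
  by (rule blocking_lines_point[OF Bbar_blocking])

lemma Bbar_nonempty: "Bbar \<noteq> {}"
proof -
  obtain L where "q.subspace L" "L \<subseteq> Gamma" "q.dim L = 2"
    using q.exists_subspace_of_dim[OF Gamma(1), of 2] Gamma(2) by auto
  then show ?thesis
    using blocking_lines_meets_line[OF Bbar_blocking] by blast
qed

lemma cone_eq: "K = (\<Union>P\<in>Bbar. P + Omega)"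
proof -
  have "span_q emb (P \<union> Omega) = P + Omega" if "P \<in> Bbar" for P
    unfolding span_q_def using q.span_Un_subspaces Bbar_point[OF that] Omega(1) by blast
  then show ?thesis
    unfolding cone_def by simp
qed

lemma mem_cone: "y \<in> K \<longleftrightarrow> (\<exists>P\<in>Bbar. \<exists>p\<in>P. \<exists>z\<in>Omega. y = p + z)"
  unfolding cone_eq set_plus_def by blast

lemma cone_subset_Pi: "K \<subseteq> Pi_s"
  unfolding cone_eq
  using q.set_plus_subset_subspace[OF Pi_s(1)] Bbar_point Gamma_Pi Omega_Pi by blast

lemma Omega_subset_cone: "Omega \<subseteq> K"
  unfolding cone_eq using q.subset_set_plus_right Bbar_point Bbar_nonempty by blast

lemma Pi_subset_U: "Pi_s \<subseteq> U"
  by (rule vec.span_superset)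

lemma Bset_cone_nu_point:
  assumes v: "v \<in> nu" "v \<noteq> 0"
  shows "vec.span {v} \<in> Bset K"
proof -
  let ?S = "vec.span {v}"
  have S: "q.subspace ?S" "?S \<subseteq> nu" "q.dim ?S = t"
    using subspace_imp_q_subspace[OF vec.subspace_span] vec.span_minimal[of "{v}" nu] nu(1) v
      q_dim_eq[OF vec.subspace_span, of "{v}"] by auto
  have Omega_nu: "q.subspace (Omega \<inter> nu)"
    using q.subspace_inter Omega(1) nu(3) by blast
  have "?S + (Omega \<inter> nu) \<subseteq> nu"
    using q.set_plus_subset_subspace[OF nu(3) S(2)] by blast
  then have "q.dim (?S + (Omega \<inter> nu)) \<le> (n - k) * t"
    using q.dim_subset nu(4) by metis
  moreover have "q.dim (?S + (Omega \<inter> nu)) + q.dim (?S \<inter> (Omega \<inter> nu)) = t + ((n - k) * t - 3)"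
    using q.dim_set_plus_Int[OF S(1) Omega_nu] S(3) q_dim_Omega_Int_nu by simp
  ultimately have "0 < q.dim (?S \<inter> (Omega \<inter> nu))"
    using t_ge_4 four_le_dim_nu by linarith
  then obtain w where w: "w \<in> ?S \<inter> (Omega \<inter> nu)" "w \<noteq> 0"
    by (rule q.exists_nonzero_of_dim_pos)
  then have "w \<in> K" "?S = vec.span {w}"
    using Omega_subset_cone vec.span_singleton_eq_of_mem[of w v] by auto
  then show ?thesis
    using w(2) by (auto simp: Bset_iff)
qed

lemma Pi_subspace_plus_Omega_meets_Gamma:
  assumes M: "q.subspace M" "M \<subseteq> Pi_s" "2 \<le> q.dim M" "M \<inter> Omega \<subseteq> {0}"
  shows "2 \<le> q.dim ((M + Omega) \<inter> Gamma)"
proof -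
  have MO: "q.subspace (M + Omega)"
    by (rule q.subspace_set_plus[OF M(1) Omega(1)])
  have "q.dim (M \<inter> Omega) = 0"
    using M(4) by simp
  then have dim_MO: "q.dim (M + Omega) = q.dim M + q.dim Omega"
    using q.dim_set_plus_Int[OF M(1) Omega(1)] by linarith
  have "M + Omega \<subseteq> Pi_s"
    by (rule q.set_plus_subset_subspace[OF Pi_s(1) M(2) Omega_Pi])
  then have "M + Omega + Gamma \<subseteq> Pi_s"
    by (rule q.set_plus_subset_subspace[OF Pi_s(1) _ Gamma_Pi])
  then have "q.dim (M + Omega + Gamma) \<le> q.dim Pi_s"
    by (rule q.dim_subset)
  moreover have "q.dim (M + Omega + Gamma) + q.dim ((M + Omega) \<inter> Gamma) = q.dim (M + Omega) + q.dim Gamma"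
    by (rule q.dim_set_plus_Int[OF MO Gamma(1)])
  ultimately show ?thesis
    using dim_MO M(3) Pi_s Omega Gamma four_le_dim_nu by linarith
qed

lemma Pi_subspace_meets_cone:
  assumes M: "q.subspace M" "M \<subseteq> Pi_s" "2 \<le> q.dim M"
  obtains m where "m \<in> M" "m \<in> K" "m \<noteq> 0"
proof (cases "M \<inter> Omega \<subseteq> {0}")
  case False
  then obtain m where "m \<in> M" "m \<in> Omega" "m \<noteq> 0"
    by blast
  then show ?thesis
    using that Omega_subset_cone by blast
next
  case True
  let ?Y = "(M + Omega) \<inter> Gamma"
  have Y: "q.subspace ?Y"
    by (rule q.subspace_inter[OF q.subspace_set_plus[OF M(1) Omega(1)] Gamma(1)])
  obtain L where L: "q.subspace L" "L \<subseteq> ?Y" "q.dim L = 2"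
    by (rule q.exists_subspace_of_dim[OF Y Pi_subspace_plus_Omega_meets_Gamma[OF M True]])
  have "L \<subseteq> Gamma"
    using L(2) by blast
  then obtain P where P: "P \<in> Bbar" "P \<subseteq> L"
    using blocking_lines_meets_line[OF Bbar_blocking L(1,3)] by blast
  have "0 < q.dim P"
    using Bbar_point[OF P(1)] by simp
  then obtain y where y: "y \<in> P" "y \<noteq> 0"
    by (rule q.exists_nonzero_of_dim_pos)
  have "y \<in> M + Omega" "y \<in> Gamma"
    using y(1) P(2) L(2) by auto
  from this(1) obtain m z where mz: "y = m + z" "m \<in> M" "z \<in> Omega"
    by (rule set_plus_elim)
  have "m \<noteq> 0"
  proof
    assume "m = 0"
    then have "y \<in> Gamma \<inter> Omega"
      using mz(1,3) \<open>y \<in> Gamma\<close> by simp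
    then show False
      using Gamma_Omega y(2) by blast
  qed
  moreover have "m = y + - z" "- z \<in> Omega"
    using mz(1) q.subspace_neg[OF Omega(1) mz(3)] by auto
  then have "m \<in> K"
    unfolding mem_cone using P(1) y(1) by blast
  ultimately show ?thesis
    using that mz(2) by blast
qed

lemma complement_of_nu_meets_Pi:
  assumes X: "vec.subspace X" "X \<subseteq> U" "X \<inter> nu \<subseteq> {0}" "2 \<le> vec.dim X"
  shows "2 \<le> q.dim (X \<inter> Pi_s)"
proof -
  have sum_U: "X + nu \<subseteq> U"
    using vec.set_plus_subset_subspace[OF vec.subspace_span X(2)] nu_Pi Pi_subset_U by blast
  have "vec.dim (X \<inter> nu) = 0"
    using X(3) by simp
  then have "vec.dim (X + nu) = vec.dim X + vec.dim nu"
    using vec.dim_set_plus_Int[OF X(1) nu(1)] by linarith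
  moreover have "vec.dim (X + nu) \<le> vec.dim U"
    using sum_U vec.dim_subset by blast
  ultimately have "vec.dim (X + nu) = vec.dim U"
    using X(4) dim_U nu(2) by linarith
  then have X_nu: "X + nu = U"
    using vec.subspace_dim_equal[OF vec.subspace_set_plus[OF X(1) nu(1)] vec.subspace_span sum_U]
    by simp
  have "Pi_s \<subseteq> (X \<inter> Pi_s) + nu"
  proof
    fix p assume p: "p \<in> Pi_s"
    then have "p \<in> X + nu"
      using X_nu Pi_subset_U by blast
    then obtain x w where xw: "p = x + w" "x \<in> X" "w \<in> nu"
      by (rule set_plus_elim)
    have "x = p - w"
      using xw by simp
    then have "x \<in> Pi_s"
      using q.subspace_diff[OF Pi_s(1) p] xw(3) nu_Pi by blast
    then show "p \<in> (X \<inter> Pi_s) + nu"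
      using xw by blast
  qed
  then have "q.dim Pi_s \<le> q.dim ((X \<inter> Pi_s) + nu)"
    using q.dim_subset by blast
  moreover have "q.dim ((X \<inter> Pi_s) + nu) + q.dim ((X \<inter> Pi_s) \<inter> nu) = q.dim (X \<inter> Pi_s) + q.dim nu"
    using q.dim_set_plus_Int[OF q.subspace_inter[OF subspace_imp_q_subspace[OF X(1)] Pi_s(1)] nu(3)] .
  ultimately show ?thesis
    using Pi_s nu by linarith
qed

lemma cone_blocks:
  assumes W: "vec.subspace W" "vec.dim W = k"
  obtains P where "P \<in> Bset K" "P \<subseteq> W"
proof -
  define X where "X = W \<inter> U"
  have X: "vec.subspace X" "X \<subseteq> W" "X \<subseteq> U"
    unfolding X_def using W vec.subspace_inter vec.subspace_span by auto
  have "vec.dim (W + U) + vec.dim X = vec.dim W + vec.dim U"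
    unfolding X_def by (rule vec.dim_set_plus_Int[OF W(1) vec.subspace_span])
  then have dim_X: "2 \<le> vec.dim X"
    using vec_dim_le_n[of "W + U"] W dim_U k_less_n by linarith
  show ?thesis
  proof (cases "X \<inter> nu \<subseteq> {0}")
    case False
    then obtain v where v: "v \<in> X" "v \<in> nu" "v \<noteq> 0"
      by blast
    then have "vec.span {v} \<subseteq> W"
      using vec.span_minimal[of "{v}" W] W(1) X(2) by blast
    then show ?thesis
      using that Bset_cone_nu_point[OF v(2,3)] by blast
  next
    case True
    have "2 \<le> q.dim (X \<inter> Pi_s)"
      by (rule complement_of_nu_meets_Pi[OF X(1,3) True dim_X])
    then obtain m where m: "m \<in> X \<inter> Pi_s" "m \<in> K" "m \<noteq> 0"
      using Pi_subspace_meets_cone q.subspace_inter[OF subspace_imp_q_subspace[OF X(1)] Pi_s(1)]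
      by (metis Int_lower2)
    then have "vec.span {m} \<subseteq> W"
      using vec.span_minimal[of "{m}" W] W(1) X(2) by blast
    moreover have "vec.span {m} \<in> Bset K"
      using m by (auto simp: Bset_iff)
    ultimately show ?thesis
      using that by blast
  qed
qed

definition tangent_line :: "('b^'n) set \<Rightarrow> ('b^'n) set \<Rightarrow> bool" where
  "tangent_line S L \<longleftrightarrow> vec.subspace L \<and> vec.dim L = 2 \<and> L \<subseteq> U \<and> (\<forall>P\<in>Bset K. P \<subseteq> L \<longrightarrow> P = S)"

lemma span_pair_complement_of_nu:
  assumes "Pi_s \<subseteq> nu + q.span {e1, e2}"
  shows "vec.dim (vec.span {e1, e2}) = 2" "vec.span {e1, e2} \<inter> nu \<subseteq> {0}"
proof -
  let ?E = "vec.span {e1, e2}"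
  have "nu + q.span {e1, e2} \<subseteq> nu + ?E"
    using q_span_subset_span unfolding set_plus_def by blast
  then have "Pi_s \<subseteq> nu + ?E"
    using assms by blast
  then have "U \<subseteq> nu + ?E"
    using vec.span_minimal vec.subspace_set_plus[OF nu(1) vec.subspace_span] by blast
  then have "vec.dim U \<le> vec.dim (nu + ?E)"
    by (rule vec.dim_subset)
  moreover have "vec.dim (nu + ?E) + vec.dim (nu \<inter> ?E) = vec.dim nu + vec.dim ?E"
    by (rule vec.dim_set_plus_Int[OF nu(1) vec.subspace_span])
  moreover have "vec.dim ?E \<le> card {e1, e2}"
    using vec.dim_le_card[of ?E "{e1, e2}"] vec.span_superset by simp
  then have "vec.dim ?E \<le> 2"
    using card_insert_le[of "{e2}" e1] by (cases "e1 = e2") auto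
  ultimately have "vec.dim (nu \<inter> ?E) = 0" "vec.dim ?E = 2"
    using dim_U nu(2) by linarith+
  then show "vec.dim ?E = 2" "?E \<inter> nu \<subseteq> {0}"
    by auto
qed

lemma obtain_pair_complement_of_nu:
  obtains e1 e2 where "e1 \<in> Pi_s" "e2 \<in> Pi_s" "e1 \<noteq> e2" "Pi_s \<subseteq> nu + q.span {e1, e2}"
proof -
  obtain E where E: "E \<subseteq> Pi_s" "q.independent E" "card E = q.dim Pi_s - q.dim nu"
    "Pi_s \<subseteq> nu + q.span E" "nu \<inter> q.span E = {0}"
    by (rule q.obtain_complement[OF nu(3) Pi_s(1) nu_Pi])
  have "card E = 2"
    using E(3) Pi_s(2) nu(4) by simp
  then obtain e1 e2 where e: "E = {e1, e2}" "e1 \<noteq> e2"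
    by (auto simp: card_2_iff)
  moreover have "e1 \<in> Pi_s" "e2 \<in> Pi_s"
    using E(1) e(1) by auto
  ultimately show ?thesis
    using that E(4) by simp
qed

lemma exists_direction_off_Pi:
  obtains u where "u \<in> U" "\<And>c. c *s u \<in> Pi_s \<Longrightarrow> c = 0"
proof -
  obtain e1 e2 where e_Pi: "e1 \<in> Pi_s" "e2 \<in> Pi_s" and e: "e1 \<noteq> e2"
    and Pi_decomp: "Pi_s \<subseteq> nu + q.span {e1, e2}"
    by (rule obtain_pair_complement_of_nu)
  note E_nu = span_pair_complement_of_nu[OF Pi_decomp]
  have "vec.independent {e1, e2}"
    using vec.card_eq_dim[OF vec.span_superset, of "{e1, e2}"] E_nu(1) e by simp
  note e_independent = vec.independent_pair_coeffs[OF this e]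
  have "1 < t"
    using t_ge_4 by simp
  then obtain \<theta> where \<theta>: "\<theta> \<notin> range emb"
    by (rule exists_not_in_range_emb)
  \<comment> \<open>no F_(q^t)-multiple of u lies in \<Pi> = \<nu> + \<langle>e1, e2\<rangle>_q, because \<theta> \<notin> F_q\<close>
  define u where "u = e1 + \<theta> *s e2"
  have "c = 0" if c: "c *s u \<in> Pi_s" for c
  proof -
    have "c *s u \<in> nu + q.span {e1, e2}"
      using c Pi_decomp by blast
    then obtain n0 y where ny: "c *s u = n0 + y" "n0 \<in> nu" "y \<in> q.span {e1, e2}"
      by (rule set_plus_elim)
    obtain \<alpha> \<beta> where y: "y = \<alpha> *\<^sub>q e1 + \<beta> *\<^sub>q e2"
      using ny(3) unfolding q.span_pair by blast
    have n0: "n0 = (c - emb \<alpha>) *s e1 + (c * \<theta> - emb \<beta>) *s e2"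
      using ny(1) unfolding y u_def scq_def
      by (simp add: algebra_simps vec.scale_left_diff_distrib vec.scale_right_distrib)
    have "n0 \<in> vec.span {e1, e2}"
      unfolding n0 by (intro vec.span_add vec.span_scale vec.span_base) auto
    then have "n0 = 0"
      using E_nu(2) ny(2) by blast
    then have "c - emb \<alpha> = 0 \<and> c * \<theta> - emb \<beta> = 0"
      using e_independent n0 by metis
    then have "c = emb \<alpha>" "c * \<theta> = emb \<beta>"
      by auto
    then have "c \<noteq> 0 \<Longrightarrow> \<theta> = emb (\<beta> / \<alpha>)"
      by (auto simp: emb_divide field_simps)
    then show "c = 0"
      using \<theta> by blast
  qed
  moreover have "u \<in> U"
    unfolding u_def using e_Pi by (intro vec.span_add vec.span_scale vec.span_base)
  ultimately show ?thesis
    using that by blast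
qed

lemma Bset_cone_subset_U:
  assumes "P \<in> Bset K"
  shows "P \<subseteq> U"
proof -
  obtain w where "w \<in> K" "P = vec.span {w}"
    using assms by (auto simp: Bset_iff)
  then show ?thesis
    using vec.span_mono[of "{w}" Pi_s] cone_subset_Pi by auto
qed

lemma tangent_line_at_nu_point:
  assumes x: "x \<in> nu" "x \<noteq> 0"
  shows "\<exists>L. tangent_line (vec.span {x}) L"
proof -
  obtain u where u: "u \<in> U" and off_Pi: "\<And>c. c *s u \<in> Pi_s \<Longrightarrow> c = 0"
    by (rule exists_direction_off_Pi) blast
  have "u \<notin> vec.span {x}"
  proof
    assume "u \<in> vec.span {x}"
    then have "1 *s u \<in> Pi_s"
      using vec.span_minimal[of "{x}" nu] nu(1) x(1) nu_Pi by auto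
    then show False
      using off_Pi by fastforce
  qed
  then have independent: "vec.independent {u, x}"
    using vec.independent_insertI[of u "{x}"] x(2) by simp
  have "x \<noteq> u"
    using \<open>u \<notin> vec.span {x}\<close> vec.span_base[of x "{x}"] by auto
  define L where "L = vec.span {x, u}"
  have "vec.dim L = 2"
    unfolding L_def using vec.dim_span_eq_card_independent[OF independent] \<open>x \<noteq> u\<close>
    by (simp add: insert_commute)
  moreover have "L \<subseteq> U"
    unfolding L_def using u x(1) nu_Pi Pi_subset_U by (intro vec.span_minimal) auto
  moreover have "P = vec.span {x}" if P: "P \<in> Bset K" "P \<subseteq> L" for P
  proof -
    obtain w where w: "w \<in> K" "w \<noteq> 0" "P = vec.span {w}"
      using P(1) by (auto simp: Bset_iff)
    then have "w \<in> L"
      using P(2) vec.span_base[of w "{w}"] by auto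
    then obtain a c where ac: "w = a *s x + c *s u"
      unfolding L_def vec.span_pair by blast
    have "a *s x \<in> Pi_s"
      using vec.subspace_scale[OF nu(1) x(1)] nu_Pi by blast
    moreover have "w \<in> Pi_s"
      using w(1) cone_subset_Pi by blast
    ultimately have "c *s u \<in> Pi_s"
      using q.subspace_diff[OF Pi_s(1)] ac by fastforce
    then have "w = a *s x"
      using off_Pi ac by simp
    then have "w \<in> vec.span {x}"
      by (simp add: vec.span_scale vec.span_base)
    then show ?thesis
      using w vec.span_singleton_eq_of_mem by blast
  qed
  ultimately show ?thesis
    unfolding tangent_line_def L_def using vec.subspace_span by blast
qed

lemma exists_translate_off:
  "\<exists>z\<in>Omega. r + z \<notin> nu + q.span {x}"
proof (rule q.exists_translate_not_in_subspace)
  show V: "q.subspace (nu + q.span {x})"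
    by (rule q.subspace_set_plus[OF nu(3) q.subspace_span])
  show "0 \<in> Omega"
    by (rule q.subspace_0[OF Omega(1)])
  show "\<not> Omega \<subseteq> nu + q.span {x}"
  proof
    assume "Omega \<subseteq> nu + q.span {x}"
    then have "Pi_s \<subseteq> nu + q.span {x}"
      using q.set_plus_subset_subspace[OF V _ q.subset_set_plus_left[OF q.subspace_span]]
        Omega_plus_nu by metis
    then have "q.dim Pi_s \<le> q.dim (nu + q.span {x})"
      by (rule q.dim_subset)
    moreover have "q.dim (nu + q.span {x}) + q.dim (nu \<inter> q.span {x}) = q.dim nu + q.dim (q.span {x})"
      by (rule q.dim_set_plus_Int[OF nu(3) q.subspace_span])
    moreover have "q.dim (q.span {x}) \<le> 1"
      using q.dim_le_card[of "q.span {x}" "{x}"] q.span_superset by simp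
    ultimately show False
      using Pi_s nu by linarith
  qed
qed

definition tangent_direction :: "'b^'n \<Rightarrow> 'b^'n \<Rightarrow> bool" where
  "tangent_direction x w \<longleftrightarrow> w \<in> Pi_s \<and> w \<notin> nu + q.span {x} \<and> (\<forall>a b. a *\<^sub>q x + b *\<^sub>q w \<in> K \<longrightarrow> b = 0)"

lemma tangent_direction_from_Gamma:
  assumes x: "x = y + z" "y \<in> Gamma" "z \<in> Omega" and g: "g \<in> Gamma"
    and avoid: "\<And>a b P. b \<noteq> 0 \<Longrightarrow> P \<in> Bbar \<Longrightarrow> a *\<^sub>q y + b *\<^sub>q g \<notin> P"
  shows "\<exists>w. tangent_direction x w"
proof -
  obtain z1 where z1: "z1 \<in> Omega" "g + z1 \<notin> nu + q.span {x}"
    using exists_translate_off by blast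
  have "g + z1 \<in> Pi_s"
    using q.subspace_add[OF Pi_s(1)] g z1(1) Gamma_Pi Omega_Pi by blast
  moreover have "b = 0" if in_cone: "a *\<^sub>q x + b *\<^sub>q (g + z1) \<in> K" for a b
  proof (rule ccontr)
    assume b: "b \<noteq> 0"
    obtain P p z' where P: "P \<in> Bbar" "p \<in> P" "z' \<in> Omega" "a *\<^sub>q x + b *\<^sub>q (g + z1) = p + z'"
      using in_cone unfolding mem_cone by blast
    have eq: "(a *\<^sub>q y + b *\<^sub>q g) + (a *\<^sub>q z + b *\<^sub>q z1) = p + z'"
      using P(4) unfolding x(1) q.scale_right_distrib by (simp add: ac_simps)
    have "a *\<^sub>q y + b *\<^sub>q g \<in> Gamma"
      using q.subspace_add[OF Gamma(1)] q.subspace_scale[OF Gamma(1)] x(2) g by blast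
    moreover have "a *\<^sub>q z + b *\<^sub>q z1 \<in> Omega"
      using q.subspace_add[OF Omega(1)] q.subspace_scale[OF Omega(1)] x(3) z1(1) by blast
    moreover have "p \<in> Gamma"
      using P(1,2) Bbar_point by blast
    \<comment> \<open>compare \<Gamma>-components in \<Pi> = \<Gamma> \<oplus> \<Omega>\<close>
    ultimately have "a *\<^sub>q y + b *\<^sub>q g = p"
      using q.direct_sum_unique[OF Gamma(1) Omega(1) Gamma_Omega _ _ _ P(3) eq] by blast
    then show False
      using avoid[OF b P(1), of a] P(2) by simp
  qed
  ultimately show ?thesis
    unfolding tangent_direction_def using z1(2) by blast
qed

lemma tangent_direction_at_Omega_point:
  assumes "x \<in> Omega"
  shows "\<exists>w. tangent_direction x w"
proof -
  have "2 \<le> q.dim Gamma"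
    using Gamma(2) by simp
  then obtain R where R: "q.subspace R" "q.dim R = 1" "R \<subseteq> Gamma" "R \<notin> Bbar"
    by (rule minimal_blocking_lines_misses_point[OF Bbar Gamma(1)])
  obtain r where r: "r \<in> R" "r \<noteq> 0"
    using q.exists_nonzero_of_dim_pos R(2) by (metis zero_less_one)
  have avoid: "a *\<^sub>q 0 + b *\<^sub>q r \<notin> P" if b: "b \<noteq> 0" and P: "P \<in> Bbar" for a b P
  proof
    assume "a *\<^sub>q 0 + b *\<^sub>q r \<in> P"
    then have "r \<in> P"
      using q.scale_mem_subspace_iff[OF b] Bbar_point[OF P] by simp
    then have "P = R"
      using q.dim_one_eq_span[OF R(1,2) r] q.dim_one_eq_span[of P r] Bbar_point[OF P] r(2) by simp
    then show False
      using R(4) P by simp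
  qed
  have "r \<in> Gamma"
    using r(1) R(3) by blast
  then show ?thesis
    using tangent_direction_from_Gamma[of x 0 x r, OF _ q.subspace_0[OF Gamma(1)] assms _ avoid]
    by simp
qed

lemma tangent_direction_off_Omega_point:
  assumes x: "x \<in> K" "x \<notin> Omega"
  shows "\<exists>w. tangent_direction x w"
proof -
  obtain P p z where pz: "P \<in> Bbar" "p \<in> P" "z \<in> Omega" "x = p + z"
    using x(1) unfolding mem_cone by blast
  have P: "q.subspace P" "q.dim P = 1" "P \<subseteq> Gamma"
    using Bbar_point[OF pz(1)] by auto
  obtain l where l: "q.subspace l" "q.dim l = 2" "l \<subseteq> Gamma" "P \<subseteq> l"
    and tangent: "\<And>P'. P' \<in> Bbar \<Longrightarrow> P' \<subseteq> l \<Longrightarrow> P' = P"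
    by (rule minimal_blocking_lines_tangent[OF Bbar pz(1)]) blast
  have "\<not> l \<subseteq> P"
    using q.dim_subset[of l P] l(2) P(2) by auto
  then obtain g where g: "g \<in> l" "g \<notin> P"
    by blast
  have avoid: "a *\<^sub>q p + b *\<^sub>q g \<notin> P'" if b: "b \<noteq> 0" and P': "P' \<in> Bbar" for a b P'
  proof
    let ?v = "a *\<^sub>q p + b *\<^sub>q g"
    assume v: "?v \<in> P'"
    have "?v \<in> P"
    proof (cases "?v = 0")
      case True
      then show ?thesis
        using q.subspace_0[OF P(1)] by simp
    next
      case False
      have "?v \<in> l"
        using q.subspace_add[OF l(1)] q.subspace_scale[OF l(1)] pz(2) l(4) g(1) by blast
      moreover have "P' = q.span {?v}"
        using q.dim_one_eq_span[of P' ?v] Bbar_point[OF P'] v False by simp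
      ultimately have "P' \<subseteq> l"
        using q.span_minimal[of "{?v}" l] l(1) by simp
      then show ?thesis
        using tangent[OF P'] v by simp
    qed
    then have "?v - a *\<^sub>q p \<in> P"
      using q.subspace_diff[OF P(1)] q.subspace_scale[OF P(1) pz(2)] by blast
    then have "g \<in> P"
      using q.scale_mem_subspace_iff[OF b P(1)] by simp
    then show False
      using g(2) by blast
  qed
  moreover have "p \<in> Gamma" "g \<in> Gamma"
    using pz(2) P(3) g(1) l(3) by auto
  ultimately show ?thesis
    using tangent_direction_from_Gamma[OF pz(4) _ pz(3)] by blast
qed

lemma exists_tangent_direction: "x \<in> K \<Longrightarrow> \<exists>w. tangent_direction x w"
  using tangent_direction_at_Omega_point tangent_direction_off_Omega_point by blast

lemma tangent_direction_complements_nu: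
  assumes x: "x \<in> K" "x \<notin> nu" and w: "tangent_direction x w"
  shows "Pi_s = nu + q.span {x, w}"
proof -
  have w_Pi: "w \<in> Pi_s" and w_off: "w \<notin> nu + q.span {x}"
    using w unfolding tangent_direction_def by auto
  note M = q.span_pair_off_subspace[OF nu(3) x(2) w_off]
  have "q.dim (nu \<inter> q.span {x, w}) = 0"
    using M(1) by auto
  then have "q.dim (nu + q.span {x, w}) = q.dim Pi_s"
    using q.dim_set_plus_Int[OF nu(3) q.subspace_span, of "{x, w}"] M(2) nu(4) Pi_s(2)
    by linarith
  moreover have sum_Pi: "nu + q.span {x, w} \<subseteq> Pi_s"
    using q.set_plus_subset_subspace[OF Pi_s(1) nu_Pi] q.span_minimal[of "{x, w}" Pi_s] Pi_s(1)
      x(1) cone_subset_Pi w_Pi by auto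
  ultimately show ?thesis
    using q.subspace_dim_equal[OF q.subspace_set_plus[OF nu(3) q.subspace_span] Pi_s(1) sum_Pi]
    by simp
qed

lemma Bset_cone_on_direction_line:
  assumes x: "x \<in> K" "x \<notin> nu" and w: "tangent_direction x w"
    and P: "P \<in> Bset K" "P \<subseteq> vec.span {x, w}"
  shows "P = vec.span {x}"
proof -
  have Pi_decomp: "Pi_s = nu + q.span {x, w}"
    by (rule tangent_direction_complements_nu[OF x w])
  then have L_nu: "vec.span {x, w} \<inter> nu \<subseteq> {0}"
    using span_pair_complement_of_nu(2)[of x w] by simp
  obtain y where y: "y \<in> K" "y \<noteq> 0" "P = vec.span {y}"
    using P(1) by (auto simp: Bset_iff)
  have "y \<in> Pi_s"
    using y(1) cone_subset_Pi by blast
  then obtain n0 m where nm: "y = n0 + m" "n0 \<in> nu" "m \<in> q.span {x, w}"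
    unfolding Pi_decomp by (rule set_plus_elim)
  have "y \<in> vec.span {x, w}"
    using P(2) y(3) vec.span_base[of y "{y}"] by auto
  moreover have "m \<in> vec.span {x, w}"
    using nm(3) q_span_subset_span by blast
  ultimately have "n0 \<in> vec.span {x, w}"
    using vec.subspace_diff[of "vec.span {x, w}" y m] nm(1) by simp
  then have "n0 = 0"
    using L_nu nm(2) by blast
  then obtain a b where ab: "y = a *\<^sub>q x + b *\<^sub>q w"
    using nm unfolding q.span_pair by auto
  then have "y = emb a *s x"
    using w y(1) unfolding tangent_direction_def by (simp add: scq_def)
  then have "y \<in> vec.span {x}"
    by (simp add: vec.span_scale vec.span_base)
  then show ?thesis
    using y(2,3) vec.span_singleton_eq_of_mem[of y x] by simp
qed

lemma tangent_line_off_nu_point: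
  assumes x: "x \<in> K" "x \<notin> nu"
  shows "\<exists>L. tangent_line (vec.span {x}) L"
proof -
  obtain w where w: "tangent_direction x w"
    using exists_tangent_direction[OF x(1)] by blast
  then have "w \<in> Pi_s"
    unfolding tangent_direction_def by blast
  then have "vec.span {x, w} \<subseteq> U"
    using x(1) cone_subset_Pi by (intro vec.span_mono) auto
  moreover have "Pi_s \<subseteq> nu + q.span {x, w}"
    using tangent_direction_complements_nu[OF x w] by simp
  then have "vec.dim (vec.span {x, w}) = 2"
    by (rule span_pair_complement_of_nu(1))
  ultimately have "tangent_line (vec.span {x}) (vec.span {x, w})"
    unfolding tangent_line_def using Bset_cone_on_direction_line[OF x w] by simp
  then show ?thesis
    by blast
qed

lemma exists_tangent_line:
  assumes "S \<in> Bset K"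
  shows "\<exists>L. tangent_line S L"
proof -
  obtain x where x: "x \<in> K" "x \<noteq> 0" "S = vec.span {x}"
    using assms by (auto simp: Bset_iff)
  show ?thesis
  proof (cases "x \<in> nu")
    case True
    then show ?thesis
      using tangent_line_at_nu_point x by blast
  next
    case False
    then show ?thesis
      using tangent_line_off_nu_point x by blast
  qed
qed

lemma tangent_line_extends:
  assumes "tangent_line S L"
  obtains W where "vec.subspace W" "vec.dim W = k" "W \<inter> U \<subseteq> L"
proof -
  have L: "vec.subspace L" "vec.dim L = 2" "L \<subseteq> U"
    using assms unfolding tangent_line_def by auto
  obtain W where W: "vec.subspace W" "vec.dim W = vec.dim L + (vec.dim (UNIV :: ('b^'n) set) - vec.dim U)"
    "W \<inter> U \<subseteq> L"
    by (rule vec.exists_subspace_Int_subset[OF vec.subspace_span L(1,3)])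
  moreover have "vec.dim L + (vec.dim (UNIV :: ('b^'n) set) - vec.dim U) = k"
    using L(2) dim_U two_le_k k_less_n by (simp add: card_cart_basis n_def)
  ultimately show ?thesis
    using that by simp
qed

lemma minimal_blocking_Bset_cone: "minimal_blocking_Q (k - 1) (Bset K)"
proof -
  have k: "k - 1 + 1 = k"
    using k_pos by simp
  have "Bset K \<subseteq> desarg_spread"
    by (auto simp: Bset_def)
  moreover have "\<exists>P\<in>Bset K. P \<subseteq> W" if "vec.subspace W" "vec.dim W = k" for W
    using cone_blocks[OF that] by blast
  ultimately have blocking: "blocking_Q (k - 1) (Bset K)"
    unfolding blocking_Q_def k sub_Q_def dim_Q_def by blast
  have "\<not> blocking_Q (k - 1) B'" if B': "B' \<subset> Bset K" for B'
  proof
    assume B'_blocking: "blocking_Q (k - 1) B'"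
    obtain S where S: "S \<in> Bset K" "S \<notin> B'"
      using B' by blast
    obtain L where L: "tangent_line S L"
      using exists_tangent_line[OF S(1)] by blast
    obtain W where W: "vec.subspace W" "vec.dim W = k" "W \<inter> U \<subseteq> L"
      by (rule tangent_line_extends[OF L])
    obtain P where P: "P \<in> B'" "P \<subseteq> W"
      using B'_blocking W(1,2) unfolding blocking_Q_def k sub_Q_def dim_Q_def by blast
    have "P \<in> Bset K"
      using P(1) B' by blast
    then have "P \<subseteq> L"
      using Bset_cone_subset_U P(2) W(3) by blast
    then have "P = S"
      using L \<open>P \<in> Bset K\<close> unfolding tangent_line_def by blast
    then show False
      using S(2) P(1) by blast
  qed
  then show ?thesis
    unfolding minimal_blocking_Q_def using blocking by blast
qed

end

theorem theorem4p10:
  fixes emb :: "'a::{finite,field} \<Rightarrow> 'b::{finite,field}"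
    and n k t :: nat
    and nu Pi_s Omega Gamma :: "('b^'n) set"
    and Bbar :: "('b^'n) set set"
  assumes emb: "subfield_emb emb"
    and t_def: "CARD('b) = CARD('a) ^ t"
    and n_def: "n = CARD('n)"
    and k_pos: "0 < k" and kn: "k < n" and t4: "4 \<le> t"
    and nu_D: "D_subspace (n - k) (nu :: ('b^'n) set)"
    and Pi_sub: "pg_q_subspace emb ((n - k) * t + 1) Pi_s" and nu_Pi: "nu \<subseteq> Pi_s"
    and Pi_span: "dim_Q (span_Q (\<Union>(Bset Pi_s))) = n - k + 2"
    and Omega_sub: "pg_q_subspace emb ((n - k) * t - 2) Omega" and Omega_Pi: "Omega \<subseteq> Pi_s"
    and Omega_nu: "pg_q_subspace emb ((n - k) * t - 4) (Omega \<inter> nu)"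
    and Gamma_sub: "pg_q_subspace emb 2 Gamma" and Gamma_Pi: "Gamma \<subseteq> Pi_s"
    and Gamma_skew: "Gamma \<inter> Omega = {0}"
    and Bbar: "minimal_blocking_lines_in emb Gamma Bbar"
    and Bbar_nu: "\<forall>P\<in>Bbar. P \<inter> nu = {0}"
  shows "minimal_blocking_Q (k - 1) (Bset (cone emb Omega Bbar))"
proof -
  interpret q: vector_space "scq emb :: 'a \<Rightarrow> 'b^'n \<Rightarrow> 'b^'n"
    by (rule vector_space_scq[OF emb])
  obtain Basis where Basis: "q.independent Basis" "UNIV \<subseteq> q.span Basis"
    using q.basis_exists[of UNIV] by blast
  interpret cone_configuration emb Basis t n k nu Pi_s Omega Gamma Bbar
  proof unfold_locales
    show "finite Basis"
      by simp
    show "q.independent Basis" "q.span Basis = UNIV"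
      using Basis by auto
  qed (use assms in auto)
  show ?thesis
    by (rule minimal_blocking_Bset_cone)
qed

end
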